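(* Let $M$ be a Puiseux monoid and let $R$ be an integral domain. Suppose $f = \alpha_n X^{q_n} + \dots + \alpha_1 X^{q_1} + \alpha_0 \in R[M]$ is written in canonical form (so $q_n > \dots > q_1 > 0$ and all $\alpha_j \neq 0$). If there is a prime ideal $P$ of $R$ such that $\alpha_n \notin P$, $\alpha_j \in P$ for all $0 \le j < n$, and $\alpha_0 \notin P^2$, then $f$ cannot be written as a product $gh$ with $g,h \in R[M]\setminus R$.
   Context: A Puiseux monoid is an additive submonoid of $(\mathbb{Q}_{\ge 0},+)$. For a commutative ring $R$ and a Puiseux monoid $M$, $R[M]$ denotes the semigroup ring of $M$ over $R$ (finite formal sums $\sum_{s\in M} f(s)X^s$ with $X^sX^t=X^{s+t}$). A canonical form of a nonzero element is a representation $\sum_i \alpha_iX^{q_i}$ with all coefficients nonzero and pairwise distinct exponents listed in decreasing order. *)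

theory Defs
  imports Complex_Main "HOL-Library.Poly_Mapping"
begin

definition puiseux_monoid :: "rat set \<Rightarrow> bool" where
  "puiseux_monoid M \<longleftrightarrow> 0 \<in> M \<and> (\<forall>x\<in>M. 0 \<le> x) \<and> (\<forall>x\<in>M. \<forall>y\<in>M. x + y \<in> M)"

text \<open>The semigroup ring R[M], realised inside the ring of finitely supported
  functions from rat to 'a (multiplication is convolution): elements with support in M.\<close>
definition semigroup_ring :: "rat set \<Rightarrow> (rat \<Rightarrow>\<^sub>0 'a::zero) set" where
  "semigroup_ring M = {f. Poly_Mapping.keys f \<subseteq> M}"

text \<open>Elements of R, viewed inside R[M] (constants).\<close>
definition constants :: "(rat \<Rightarrow>\<^sub>0 'a::zero) set" where
  "constants = {f. Poly_Mapping.keys f \<subseteq> {0}}"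

definition is_ideal :: "'a::comm_ring_1 set \<Rightarrow> bool" where
  "is_ideal I \<longleftrightarrow> 0 \<in> I \<and> (\<forall>x\<in>I. \<forall>y\<in>I. x + y \<in> I) \<and> (\<forall>x\<in>I. \<forall>r. r * x \<in> I)"

definition prime_ideal :: "'a::comm_ring_1 set \<Rightarrow> bool" where
  "prime_ideal P \<longleftrightarrow> is_ideal P \<and> P \<noteq> UNIV \<and> (\<forall>a b. a * b \<in> P \<longrightarrow> a \<in> P \<or> b \<in> P)"

definition ideal_square :: "'a::comm_ring_1 set \<Rightarrow> 'a set" where
  "ideal_square P = {x. \<exists>(n::nat) a b. (\<forall>i<n. a i \<in> P \<and> b i \<in> P) \<and> x = (\<Sum>i<n. a i * b i)}"

end

theory Submission
  imports Defs
begin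

text \<open>Reduce modulo \<open>P\<close>: the image \<open>g\<^sub>P\<close> of \<open>g\<close> in \<open>(R/P)[M]\<close> is supported on
  \<open>keys_mod P g\<close>. Since \<open>f \<equiv> \<alpha>\<^sub>n X\<^bsup>q\<^sub>n\<^esup>\<close> modulo \<open>P\<close>, a factorisation \<open>f = g h\<close> makes
  \<open>g\<^sub>P h\<^sub>P\<close> a monomial. Over a totally ordered exponent monoid the lowest exponents of \<open>g\<^sub>P\<close>
  and \<open>h\<^sub>P\<close> add up to an exponent of \<open>g\<^sub>P h\<^sub>P\<close>, and so do the highest ones; hence \<open>g\<^sub>P\<close> and
  \<open>h\<^sub>P\<close> are monomials of exponents \<open>s\<close>, \<open>t\<close> with \<open>s + t = q\<^sub>n\<close>. The same fact for the zero
  ideal gives \<open>deg (g h) = deg g + deg h\<close>, so \<open>s\<close> and \<open>t\<close> are the degrees of \<open>g\<close> and \<open>h\<close>,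
  which are positive because \<open>g\<close> and \<open>h\<close> are not constants. So the constant terms of \<open>g\<close>
  and \<open>h\<close> lie in \<open>P\<close>, and \<open>\<alpha>\<^sub>0\<close>, their product, lies in \<open>P\<^sup>2\<close>.\<close>

lemma is_ideal_zero: "is_ideal {0::'a::comm_ring_1}"
  by (simp add: is_ideal_def)

lemma prime_ideal_zero: "prime_ideal {0::'a::idom}"
proof -
  have "{0::'a} \<noteq> UNIV" by (metis UNIV_I singletonD zero_neq_one)
  then show ?thesis by (auto simp: prime_ideal_def is_ideal_zero)
qed

lemma is_ideal_mult_left: "is_ideal I \<Longrightarrow> x \<in> I \<Longrightarrow> y * x \<in> I"
  by (simp add: is_ideal_def)

lemma is_ideal_mult_right: "is_ideal I \<Longrightarrow> x \<in> I \<Longrightarrow> x * y \<in> I"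
  by (metis is_ideal_mult_left mult.commute)

lemma is_ideal_sum:
  assumes "is_ideal I" "\<And>x. x \<in> S \<Longrightarrow> F x \<in> I"
  shows "sum F S \<in> I"
proof (cases "finite S")
  case True
  then show ?thesis using assms(2)
    by (induction S rule: finite_induct) (use assms(1) in \<open>auto simp: is_ideal_def\<close>)
next
  case False
  then show ?thesis using assms(1) by (simp add: is_ideal_def)
qed

lemma is_ideal_diff_notin:
  fixes x y :: "'a::comm_ring_1"
  assumes I: "is_ideal I" and "x - y \<in> I" "y \<notin> I"
  shows "x \<notin> I"
proof
  assume "x \<in> I"
  moreover have "(-1) * (x - y) \<in> I" using I \<open>x - y \<in> I\<close> by (rule is_ideal_mult_left)
  ultimately have "x + (-1) * (x - y) \<in> I" using I unfolding is_ideal_def by blast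
  then show False using \<open>y \<notin> I\<close> by simp
qed

lemma mult_mem_ideal_square: "a \<in> P \<Longrightarrow> b \<in> P \<Longrightarrow> a * b \<in> ideal_square P"
  unfolding ideal_square_def
  by (intro CollectI exI[of _ "1::nat"] exI[of _ "\<lambda>_. a"] exI[of _ "\<lambda>_. b"]) auto

lemma eq_of_add_eq_of_le:
  fixes s t a b :: "'b::{ordered_cancel_comm_monoid_add, linorder}"
  assumes "s \<le> a" "t \<le> b" "s + t = a + b"
  shows "s = a \<and> t = b"
  using assms by (metis add_less_le_mono add_le_less_mono order_le_less less_irrefl)

lemma lookup_times_eq_sum:
  fixes g h :: "'b::comm_monoid_add \<Rightarrow>\<^sub>0 'a::comm_semiring_0"
  assumes "finite A" "finite B" "Poly_Mapping.keys g \<subseteq> A" "Poly_Mapping.keys h \<subseteq> B"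
  shows "Poly_Mapping.lookup (g * h) k
    = (\<Sum>(a, b)\<in>A \<times> B. if a + b = k then Poly_Mapping.lookup g a * Poly_Mapping.lookup h b else 0)"
proof -
  have inner: "(\<Sum>b. Poly_Mapping.lookup h b when k = a + b)
      = (\<Sum>b\<in>B. Poly_Mapping.lookup h b when k = a + b)" for a
    by (rule Sum_any.expand_superset) (use assms in \<open>auto simp: when_def in_keys_iff\<close>)
  have "Poly_Mapping.lookup (g * h) k
      = (\<Sum>a. Poly_Mapping.lookup g a * (\<Sum>b\<in>B. Poly_Mapping.lookup h b when k = a + b))"
    by (simp add: lookup_mult inner)
  also have "\<dots> = (\<Sum>a\<in>A. Poly_Mapping.lookup g a * (\<Sum>b\<in>B. Poly_Mapping.lookup h b when k = a + b))"
  proof (rule Sum_any.expand_superset)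
    show "{a. Poly_Mapping.lookup g a * (\<Sum>b\<in>B. Poly_Mapping.lookup h b when k = a + b) \<noteq> 0} \<subseteq> A"
    proof
      fix a assume "a \<in> {a. Poly_Mapping.lookup g a * (\<Sum>b\<in>B. Poly_Mapping.lookup h b when k = a + b) \<noteq> 0}"
      then have "a \<in> Poly_Mapping.keys g" by (auto simp: in_keys_iff)
      then show "a \<in> A" using assms(3) ..
    qed
  qed (fact assms(1))
  also have "\<dots> = (\<Sum>(a, b)\<in>A \<times> B. if a + b = k then Poly_Mapping.lookup g a * Poly_Mapping.lookup h b else 0)"
    unfolding sum.cartesian_product[symmetric] sum_distrib_left
    by (intro sum.cong refl) (auto simp: when_def)
  finally show ?thesis .
qed

lemma lookup_times_congruent:
  fixes g h :: "'b::comm_monoid_add \<Rightarrow>\<^sub>0 'a::comm_ring_1"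
  assumes I: "is_ideal I"
    and others: "\<And>a b. a + b = a0 + b0 \<Longrightarrow> (a, b) \<noteq> (a0, b0)
      \<Longrightarrow> Poly_Mapping.lookup g a * Poly_Mapping.lookup h b \<in> I"
  shows "Poly_Mapping.lookup (g * h) (a0 + b0)
    - Poly_Mapping.lookup g a0 * Poly_Mapping.lookup h b0 \<in> I"
proof -
  define A where "A = insert a0 (Poly_Mapping.keys g)"
  define B where "B = insert b0 (Poly_Mapping.keys h)"
  let ?F = "\<lambda>(a, b). if a + b = a0 + b0
    then Poly_Mapping.lookup g a * Poly_Mapping.lookup h b else 0"
  have fin: "finite (A \<times> B)" by (simp add: A_def B_def)
  have "Poly_Mapping.lookup (g * h) (a0 + b0) = sum ?F (A \<times> B)"
    by (rule lookup_times_eq_sum) (auto simp: A_def B_def)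
  also have "\<dots> = ?F (a0, b0) + sum ?F (A \<times> B - {(a0, b0)})"
    by (rule sum.remove) (use fin in \<open>auto simp: A_def B_def\<close>)
  finally have "Poly_Mapping.lookup (g * h) (a0 + b0)
      - Poly_Mapping.lookup g a0 * Poly_Mapping.lookup h b0 = sum ?F (A \<times> B - {(a0, b0)})"
    by simp
  also have "\<dots> \<in> I"
  proof (rule is_ideal_sum[OF I])
    fix x assume x: "x \<in> A \<times> B - {(a0, b0)}"
    show "?F x \<in> I"
    proof (cases x)
      case (Pair a b)
      with x others[of a b] I show ?thesis by (auto simp: is_ideal_def)
    qed
  qed
  finally show ?thesis .
qed

lemma lookup_times_zero:
  fixes g h :: "'b::ordered_cancel_comm_monoid_add \<Rightarrow>\<^sub>0 'a::comm_ring_1"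
  assumes "Poly_Mapping.keys g \<subseteq> {0..}" "Poly_Mapping.keys h \<subseteq> {0..}"
  shows "Poly_Mapping.lookup (g * h) 0 = Poly_Mapping.lookup g 0 * Poly_Mapping.lookup h 0"
proof -
  have "Poly_Mapping.lookup (g * h) (0 + 0)
      - Poly_Mapping.lookup g 0 * Poly_Mapping.lookup h 0 \<in> {0}"
  proof (rule lookup_times_congruent[OF is_ideal_zero])
    fix a b :: 'b assume ab: "a + b = 0 + 0" "(a, b) \<noteq> (0, 0)"
    show "Poly_Mapping.lookup g a * Poly_Mapping.lookup h b \<in> {0}"
    proof (cases "a \<in> Poly_Mapping.keys g \<and> b \<in> Poly_Mapping.keys h")
      case True
      then have "0 \<le> a" "0 \<le> b" using assms by auto
      with ab show ?thesis by (simp add: add_nonneg_eq_0_iff)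
    next
      case False
      then show ?thesis by (auto simp: in_keys_iff)
    qed
  qed
  then show ?thesis by simp
qed

definition keys_mod :: "'a set \<Rightarrow> ('b \<Rightarrow>\<^sub>0 'a::zero) \<Rightarrow> 'b set" where
  "keys_mod P g = {a. Poly_Mapping.lookup g a \<notin> P}"

lemma keys_mod_subset_keys: "0 \<in> P \<Longrightarrow> keys_mod P g \<subseteq> Poly_Mapping.keys g"
  by (auto simp: keys_mod_def in_keys_iff)

lemma finite_keys_mod: "0 \<in> P \<Longrightarrow> finite (keys_mod P g)"
  by (rule finite_subset[OF keys_mod_subset_keys finite_keys])

lemma keys_mod_zero [simp]: "keys_mod {0} g = Poly_Mapping.keys g"
  by (auto simp: keys_mod_def in_keys_iff)

lemma keys_mod_times_nonempty:
  fixes g h :: "'b::comm_monoid_add \<Rightarrow>\<^sub>0 'a::comm_ring_1"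
  assumes I: "is_ideal I" and "keys_mod I (g * h) \<noteq> {}"
  shows "keys_mod I g \<noteq> {}"
proof
  assume "keys_mod I g = {}"
  then have g: "Poly_Mapping.lookup g a * c \<in> I" for a c
    using is_ideal_mult_right[OF I] by (auto simp: keys_mod_def)
  have "0 \<in> I" using I by (simp add: is_ideal_def)
  have "Poly_Mapping.lookup (g * h) k \<in> I" for k
    unfolding lookup_times_eq_sum[OF finite_keys finite_keys order.refl order.refl]
    by (rule is_ideal_sum[OF I]) (auto simp: g \<open>0 \<in> I\<close>)
  with \<open>keys_mod I (g * h) \<noteq> {}\<close> show False by (auto simp: keys_mod_def)
qed

lemma keys_mod_times_add:
  fixes g h :: "'b::comm_monoid_add \<Rightarrow>\<^sub>0 'a::comm_ring_1"
  assumes P: "prime_ideal P" and a0: "a0 \<in> keys_mod P g" and b0: "b0 \<in> keys_mod P h"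
    and unique: "\<And>a b. a \<in> keys_mod P g \<Longrightarrow> b \<in> keys_mod P h \<Longrightarrow> a + b = a0 + b0
      \<Longrightarrow> a = a0 \<and> b = b0"
  shows "a0 + b0 \<in> keys_mod P (g * h)"
proof -
  have I: "is_ideal P" using P by (simp add: prime_ideal_def)
  have "Poly_Mapping.lookup (g * h) (a0 + b0)
      - Poly_Mapping.lookup g a0 * Poly_Mapping.lookup h b0 \<in> P"
  proof (rule lookup_times_congruent[OF I])
    fix a b assume "a + b = a0 + b0" "(a, b) \<noteq> (a0, b0)"
    then have "Poly_Mapping.lookup g a \<in> P \<or> Poly_Mapping.lookup h b \<in> P"
      using unique by (auto simp: keys_mod_def)
    then show "Poly_Mapping.lookup g a * Poly_Mapping.lookup h b \<in> P"
      using is_ideal_mult_left[OF I] is_ideal_mult_right[OF I] by blast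
  qed
  moreover have "Poly_Mapping.lookup g a0 * Poly_Mapping.lookup h b0 \<notin> P"
    using P a0 b0 by (auto simp: prime_ideal_def keys_mod_def)
  ultimately show ?thesis
    using is_ideal_diff_notin[OF I] by (auto simp: keys_mod_def)
qed

lemma Min_keys_mod_times:
  fixes g h :: "'b::{ordered_cancel_comm_monoid_add, linorder} \<Rightarrow>\<^sub>0 'a::comm_ring_1"
  assumes P: "prime_ideal P" and ne: "keys_mod P g \<noteq> {}" "keys_mod P h \<noteq> {}"
  shows "Min (keys_mod P g) + Min (keys_mod P h) \<in> keys_mod P (g * h)"
proof -
  let ?G = "keys_mod P g" and ?H = "keys_mod P h"
  have "0 \<in> P" using P by (simp add: prime_ideal_def is_ideal_def)
  then have fin: "finite ?G" "finite ?H" by (simp_all add: finite_keys_mod)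
  show ?thesis
  proof (rule keys_mod_times_add[OF P])
    show "Min ?G \<in> ?G" "Min ?H \<in> ?H" using fin ne by simp_all
    fix a b assume "a \<in> ?G" "b \<in> ?H" "a + b = Min ?G + Min ?H"
    then show "a = Min ?G \<and> b = Min ?H"
      using eq_of_add_eq_of_le Min_le[OF fin(1)] Min_le[OF fin(2)] by metis
  qed
qed

lemma Max_keys_mod_times:
  fixes g h :: "'b::{ordered_cancel_comm_monoid_add, linorder} \<Rightarrow>\<^sub>0 'a::comm_ring_1"
  assumes P: "prime_ideal P" and ne: "keys_mod P g \<noteq> {}" "keys_mod P h \<noteq> {}"
  shows "Max (keys_mod P g) + Max (keys_mod P h) \<in> keys_mod P (g * h)"
proof -
  let ?G = "keys_mod P g" and ?H = "keys_mod P h"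
  have "0 \<in> P" using P by (simp add: prime_ideal_def is_ideal_def)
  then have fin: "finite ?G" "finite ?H" by (simp_all add: finite_keys_mod)
  show ?thesis
  proof (rule keys_mod_times_add[OF P])
    show "Max ?G \<in> ?G" "Max ?H \<in> ?H" using fin ne by simp_all
    fix a b assume "a \<in> ?G" "b \<in> ?H" "a + b = Max ?G + Max ?H"
    then show "a = Max ?G \<and> b = Max ?H"
      using eq_of_add_eq_of_le Max_ge[OF fin(1)] Max_ge[OF fin(2)] by metis
  qed
qed

lemma Max_keys_times:
  fixes g h :: "'b::{ordered_cancel_comm_monoid_add, linorder} \<Rightarrow>\<^sub>0 'a::idom"
  assumes "g \<noteq> 0" "h \<noteq> 0"
  shows "Max (Poly_Mapping.keys (g * h)) = Max (Poly_Mapping.keys g) + Max (Poly_Mapping.keys h)"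
proof (rule antisym)
  have top: "Max (Poly_Mapping.keys g) + Max (Poly_Mapping.keys h) \<in> Poly_Mapping.keys (g * h)"
    using Max_keys_mod_times[OF prime_ideal_zero, of g h] assms by simp
  then show "Max (Poly_Mapping.keys g) + Max (Poly_Mapping.keys h) \<le> Max (Poly_Mapping.keys (g * h))"
    by simp
  have "Max (Poly_Mapping.keys (g * h)) \<in> Poly_Mapping.keys (g * h)"
    using top by (intro Max_in) auto
  then obtain a b where "a \<in> Poly_Mapping.keys g" "b \<in> Poly_Mapping.keys h"
    and "Max (Poly_Mapping.keys (g * h)) = a + b"
    using keys_mult[of g h] by blast
  then show "Max (Poly_Mapping.keys (g * h)) \<le> Max (Poly_Mapping.keys g) + Max (Poly_Mapping.keys h)"
    by (simp add: add_mono)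
qed

lemma keys_mod_times_singleton:
  fixes g h :: "'b::{ordered_cancel_comm_monoid_add, linorder} \<Rightarrow>\<^sub>0 'a::comm_ring_1"
  assumes P: "prime_ideal P" and gh: "keys_mod P (g * h) = {m}"
  obtains s t where "keys_mod P g = {s}" "keys_mod P h = {t}" "s + t = m"
proof -
  have I: "is_ideal P" and "0 \<in> P" using P by (auto simp: prime_ideal_def is_ideal_def)
  let ?G = "keys_mod P g" and ?H = "keys_mod P h"
  have ne: "?G \<noteq> {}" "?H \<noteq> {}"
    using keys_mod_times_nonempty[OF I, of g h] keys_mod_times_nonempty[OF I, of h g] gh
    by (auto simp: mult.commute)
  have fin: "finite ?G" "finite ?H" using \<open>0 \<in> P\<close> by (simp_all add: finite_keys_mod)
  have "Min ?G + Min ?H = m" "Max ?G + Max ?H = m"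
    using Min_keys_mod_times[OF P ne] Max_keys_mod_times[OF P ne] gh by auto
  moreover have "Min ?G \<le> Max ?G" "Min ?H \<le> Max ?H"
    using fin ne by (simp_all add: Min_le_iff)
  ultimately have "Min ?G = Max ?G" "Min ?H = Max ?H"
    using eq_of_add_eq_of_le by metis+
  moreover have "A = {Max A}" if A: "finite A" "A \<noteq> {}" "Min A = Max A" for A :: "'b set"
  proof (intro equalityI subsetI)
    fix x assume "x \<in> A"
    then show "x \<in> {Max A}" using A Min_le[OF A(1)] Max_ge[OF A(1)] by (metis antisym singletonI)
  qed (use A in \<open>auto intro: Max_in\<close>)
  ultimately have "?G = {Max ?G}" "?H = {Max ?H}" using fin ne by blast+
  with that \<open>Max ?G + Max ?H = m\<close> show ?thesis by blast
qed

lemma keys_mod_times_eq_Max: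
  fixes g h :: "'b::{ordered_cancel_comm_monoid_add, linorder} \<Rightarrow>\<^sub>0 'a::idom"
  assumes P: "prime_ideal P" and gh: "keys_mod P (g * h) = {Max (Poly_Mapping.keys (g * h))}"
  shows "keys_mod P g = {Max (Poly_Mapping.keys g)}" "keys_mod P h = {Max (Poly_Mapping.keys h)}"
proof -
  have "0 \<in> P" using P by (simp add: prime_ideal_def is_ideal_def)
  obtain s t where s: "keys_mod P g = {s}" and t: "keys_mod P h = {t}"
    and st: "s + t = Max (Poly_Mapping.keys (g * h))"
    using keys_mod_times_singleton[OF P gh] .
  have "s \<in> Poly_Mapping.keys g" "t \<in> Poly_Mapping.keys h"
    using s t keys_mod_subset_keys[OF \<open>0 \<in> P\<close>, of g] keys_mod_subset_keys[OF \<open>0 \<in> P\<close>, of h]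
    by auto
  then have "g \<noteq> 0" "h \<noteq> 0" and le: "s \<le> Max (Poly_Mapping.keys g)" "t \<le> Max (Poly_Mapping.keys h)"
    by auto
  with st have "s = Max (Poly_Mapping.keys g) \<and> t = Max (Poly_Mapping.keys h)"
    by (intro eq_of_add_eq_of_le le) (simp add: Max_keys_times)
  with s t show "keys_mod P g = {Max (Poly_Mapping.keys g)}" "keys_mod P h = {Max (Poly_Mapping.keys h)}"
    by simp_all
qed

lemma lookup_sum_single:
  assumes "finite J" "inj_on q J" "j \<in> J"
  shows "Poly_Mapping.lookup (\<Sum>i\<in>J. Poly_Mapping.single (q i) (c i)) (q j) = c j"
proof -
  have "Poly_Mapping.lookup (\<Sum>i\<in>J. Poly_Mapping.single (q i) (c i)) (q j)
      = (\<Sum>i\<in>J. c i when q i = q j)"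
    by (simp add: lookup_sum lookup_single)
  also have "\<dots> = (\<Sum>i\<in>J. c i when i = j)"
    using assms(2,3) by (intro sum.cong refl) (simp add: inj_on_eq_iff)
  also have "\<dots> = c j"
    using assms(1,3) by (simp add: when_def)
  finally show ?thesis .
qed

lemma keys_sum_single_subset:
  "Poly_Mapping.keys (\<Sum>i\<in>J. Poly_Mapping.single (q i) (c i)) \<subseteq> q ` J"
  using keys_sum[of "\<lambda>i. Poly_Mapping.single (q i) (c i)" J] by (auto split: if_splits)

lemma Max_keys_sum_single:
  fixes q :: "nat \<Rightarrow> 'b::linorder" and c :: "nat \<Rightarrow> 'a::comm_monoid_add"
  assumes mono: "strict_mono_on {..n} q" and "c n \<noteq> 0"
  shows "Max (Poly_Mapping.keys (\<Sum>j\<le>n. Poly_Mapping.single (q j) (c j))) = q n"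
proof (rule Max_eqI)
  show "q n \<in> Poly_Mapping.keys (\<Sum>j\<le>n. Poly_Mapping.single (q j) (c j))"
    using lookup_sum_single[OF finite_atMost strict_mono_on_imp_inj_on[OF mono], of n c] assms(2)
    by (simp add: in_keys_iff)
  fix y assume "y \<in> Poly_Mapping.keys (\<Sum>j\<le>n. Poly_Mapping.single (q j) (c j))"
  then have "y \<in> q ` {..n}" by (rule subsetD[OF keys_sum_single_subset])
  then obtain j where "j \<le> n" "y = q j" by auto
  then show "y \<le> q n" using strict_mono_on_leD[OF mono] by simp
qed simp

lemma keys_mod_sum_single:
  fixes q :: "nat \<Rightarrow> 'b::linorder" and c :: "nat \<Rightarrow> 'a::comm_monoid_add"
  assumes "0 \<in> P" and mono: "strict_mono_on {..n} q" and "c n \<notin> P" "\<forall>j<n. c j \<in> P"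
  shows "keys_mod P (\<Sum>j\<le>n. Poly_Mapping.single (q j) (c j)) = {q n}"
proof -
  have coeff: "Poly_Mapping.lookup (\<Sum>j\<le>n. Poly_Mapping.single (q j) (c j)) (q j) = c j"
    if "j \<le> n" for j
    using lookup_sum_single[OF finite_atMost strict_mono_on_imp_inj_on[OF mono]] that by simp
  show ?thesis
  proof (intro equalityI subsetI)
    fix x assume x: "x \<in> keys_mod P (\<Sum>j\<le>n. Poly_Mapping.single (q j) (c j))"
    then have "x \<in> q ` {..n}"
      by (rule subsetD[OF keys_sum_single_subset subsetD[OF keys_mod_subset_keys[OF \<open>0 \<in> P\<close>]]])
    then obtain j where "j \<le> n" "x = q j" by auto
    with x show "x \<in> {q n}" using coeff assms(4) by (cases "j < n") (auto simp: keys_mod_def)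
  qed (use coeff assms(3) in \<open>simp add: keys_mod_def\<close>)
qed

lemma Max_keys_pos:
  fixes g :: "'b::{ordered_cancel_comm_monoid_add, linorder} \<Rightarrow>\<^sub>0 'a::zero"
  assumes "Poly_Mapping.keys g \<subseteq> {0..}" "\<not> Poly_Mapping.keys g \<subseteq> {0}"
  shows "0 < Max (Poly_Mapping.keys g)"
proof -
  obtain a where "a \<in> Poly_Mapping.keys g" "a \<noteq> 0" using assms(2) by auto
  moreover from this have "a \<le> Max (Poly_Mapping.keys g)" by simp
  ultimately show ?thesis using assms(1) by (auto simp: order_le_less)
qed

theorem mainTheorem3:
  fixes M :: "rat set" and f :: "rat \<Rightarrow>\<^sub>0 'a::idom"
    and n :: nat and \<alpha> :: "nat \<Rightarrow> 'a" and q :: "nat \<Rightarrow> rat" and P :: "'a set"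
  assumes "puiseux_monoid M"
    and "\<forall>j\<le>n. q j \<in> M"
    and "q 0 = 0"
    and "\<forall>i j. i < j \<and> j \<le> n \<longrightarrow> q i < q j"
    and "\<forall>j\<le>n. \<alpha> j \<noteq> 0"
    and "f = (\<Sum>j\<le>n. Poly_Mapping.single (q j) (\<alpha> j))"
    and "prime_ideal P"
    and "\<alpha> n \<notin> P"
    and "\<forall>j<n. \<alpha> j \<in> P"
    and "\<alpha> 0 \<notin> ideal_square P"
  shows "\<not> (\<exists>g h. g \<in> semigroup_ring M - constants \<and> h \<in> semigroup_ring M - constants \<and> f = g * h)"
proof
  assume "\<exists>g h. g \<in> semigroup_ring M - constants \<and> h \<in> semigroup_ring M - constants \<and> f = g * h"
  then obtain g h where g: "g \<in> semigroup_ring M - constants" and h: "h \<in> semigroup_ring M - constants"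
    and fgh: "f = g * h" by blast
  have "0 \<in> P" using assms(7) by (simp add: prime_ideal_def is_ideal_def)
  have mono: "strict_mono_on {..n} q" using assms(4) by (auto intro: strict_mono_onI)
  have "keys_mod P f = {Max (Poly_Mapping.keys f)}"
    unfolding assms(6) using assms(5)
    by (simp add: keys_mod_sum_single[OF \<open>0 \<in> P\<close> mono assms(8,9)] Max_keys_sum_single[OF mono])
  then have "keys_mod P g = {Max (Poly_Mapping.keys g)}" "keys_mod P h = {Max (Poly_Mapping.keys h)}"
    unfolding fgh by (rule keys_mod_times_eq_Max[OF assms(7)])+
  moreover have "0 < Max (Poly_Mapping.keys g)" "0 < Max (Poly_Mapping.keys h)"
    using g h assms(1) by (intro Max_keys_pos; force simp: semigroup_ring_def constants_def puiseux_monoid_def)+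
  ultimately have "0 \<notin> keys_mod P g" "0 \<notin> keys_mod P h"
    by auto
  then have "Poly_Mapping.lookup g 0 * Poly_Mapping.lookup h 0 \<in> ideal_square P"
    by (intro mult_mem_ideal_square) (simp_all add: keys_mod_def)
  moreover have "Poly_Mapping.lookup (g * h) 0 = Poly_Mapping.lookup g 0 * Poly_Mapping.lookup h 0"
    using g h assms(1) by (intro lookup_times_zero) (auto simp: semigroup_ring_def puiseux_monoid_def)
  moreover have "Poly_Mapping.lookup f 0 = \<alpha> 0"
    using lookup_sum_single[OF finite_atMost strict_mono_on_imp_inj_on[OF mono], of 0 \<alpha>] assms(3,6)
    by simp
  ultimately show False
    using assms(10) fgh by simp
qed

end
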